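(* Let $\psi_u$ and $\psi_{\tilde u}$ be independent, each uniformly distributed on $(0,2\pi)$. Then, conditioned on $t=\frac34-\frac{\psi_u}{2\pi}$ (equivalently, on $\psi_u$), the CDF of $Y_{\tilde u}$ is, for $Y\in[0,\zeta_{\tilde u}/V^2]$, $$F_{Y_{\tilde u}}(Y\mid t)=1-\frac{1}{\pi}\arccos\!\Big(\frac{2V^2}{\zeta_{\tilde u}}Y-1\Big),\qquad V=\frac{\sin(\pi/\mu)}{W}.$$ Since this does not depend on $t$, $Y_{\tilde u}$ is independent of $\psi_u$ and hence of $\alpha_{\mathrm I}$.
   Context: Setup: Let $W\ge 1$ be an integer and $\mu\ge 2$ an even integer, and set $K=\mu W+1$. Let $\zeta_u>0$, and for $k=1,\dots,K$ let $h_{u,k}=\zeta_u^{1/2}e^{j(\psi_u+2\pi(k-1)/\mu)}$, where $j=\sqrt{-1}$. Let $\mathcal K_1=\{k\in\{2,\dots,K\}:\operatorname{Re}(h_{u,k})>0\}$ and $\alpha_{\mathrm I}=\big(\sum_{k\in\mathcal K_1}\operatorname{Re}(h_{u,k})\big)^2$. For an interfering user $\tilde u$ with $\zeta_{\tilde u}>0$ and phase $\psi_{\tilde u}$, let $h_{\tilde u,k}=\zeta_{\tilde u}^{1/2}e^{j(\psi_{\tilde u}+2\pi(k-1)/\mu)}$ and $Y_{\tilde u}=\big(\sum_{k\in\mathcal K_1}\operatorname{Re}(h_{\tilde u,k})\big)^2$. *)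

theory Defs
  imports "HOL-Probability.Probability"
begin

definition hcoef :: "real \<Rightarrow> real \<Rightarrow> nat \<Rightarrow> nat \<Rightarrow> complex" where
  "hcoef zeta psi mu k = complex_of_real (sqrt zeta) * cis (psi + 2 * pi * (real k - 1) / real mu)"

text \<open>The index set K_1 = {k in {2..K} : Re h_{u,k} > 0}, K = mu W + 1.\<close>
definition K1 :: "nat \<Rightarrow> nat \<Rightarrow> real \<Rightarrow> real \<Rightarrow> nat set" where
  "K1 W mu zeta_u psi_u = {k \<in> {2..mu * W + 1}. Re (hcoef zeta_u psi_u mu k) > 0}"

definition alphaI :: "nat \<Rightarrow> nat \<Rightarrow> real \<Rightarrow> real \<Rightarrow> real" where
  "alphaI W mu zeta_u psi_u = (\<Sum>k\<in>K1 W mu zeta_u psi_u. Re (hcoef zeta_u psi_u mu k))\<^sup>2"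

definition Yint :: "nat \<Rightarrow> nat \<Rightarrow> real \<Rightarrow> real \<Rightarrow> real \<Rightarrow> real \<Rightarrow> real" where
  "Yint W mu zeta_u psi_u zeta_t psi_t =
     (\<Sum>k\<in>K1 W mu zeta_u psi_u. Re (hcoef zeta_t psi_t mu k))\<^sup>2"

definition Unif :: "real measure" where
  "Unif = uniform_measure lborel {0<..<2 * pi}"

end

theory Submission
  imports Defs
begin

(* For almost every psi_u no cosine cos (psi_u + 2 pi k / mu) vanishes; then, in each of the W
   periods of length mu, the indices of K_1 form a cyclic run of mu/2 consecutive residues.
   Along such a run the cosines cos (t + 2 pi k / mu) telescope to a single sine, so that
   Y = (zeta / V^2) sin^2 (t + c) with a phase c depending on psi_u only. As psi_t is uniform
   on the circle, the shift by c does not change the law of Y: it is the law of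
   (zeta / V^2) sin^2 psi_t whatever psi_u is, which gives the arccos formula and the
   independence of Y from psi_u, hence from alpha_I. *)

lemma periodic_add_of_int_mult:
  fixes P :: "real \<Rightarrow> bool"
  assumes per: "\<And>x. P (x + T) = P x"
  shows "P (x + of_int k * T) = P x"
proof -
  have nat: "P (y + real m * T) = P y" for y m
  proof (induction m)
    case (Suc m)
    then show ?case using per[of "y + real m * T"] by (simp add: algebra_simps)
  qed simp
  show ?thesis
  proof (cases "k \<ge> 0")
    case True
    then show ?thesis using nat[of x "nat k"] by simp
  next
    case False
    then show ?thesis using nat[of "x + of_int k * T" "nat (- k)"] by simp
  qed
qed

lemma emeasure_lborel_translate:
  fixes S :: "real set"
  assumes "S \<in> sets borel"
  shows "emeasure lborel ((\<lambda>t. t + d) -` S) = emeasure lborel S"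
proof -
  have "emeasure (distr lborel borel ((+) d)) S = emeasure lborel ((+) d -` S)"
    using assms by (subst emeasure_distr) auto
  moreover have "(\<lambda>t. t + d) = (+) d" by (auto simp: fun_eq_iff)
  ultimately show ?thesis by (simp add: lborel_distr_plus)
qed

lemma emeasure_lborel_periodic_shift:
  fixes P :: "real \<Rightarrow> bool"
  assumes [measurable]: "Measurable.pred borel P"
    and per: "\<And>x. P (x + T) = P x" and T: "T > 0"
  shows "emeasure lborel {t\<in>{0<..<T}. P (t + c)} = emeasure lborel {t\<in>{0<..<T}. P t}"
proof -
  (* Reduce c modulo T; the shifted window then splits at T - c' into translates of two
     pieces of the original one. *)
  define c' where "c' = T * frac (c / T)"
  have c': "0 \<le> c'" "c' < T"
    using T frac_ge_0[of "c / T"] frac_lt_1[of "c / T"] by (auto simp: c'_def)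
  have Pc: "P (t + c) = P (t + c')" for t
  proof -
    have "t + c = (t + c') + of_int \<lfloor>c / T\<rfloor> * T"
      using T by (simp add: c'_def frac_def field_simps)
    then show ?thesis using periodic_add_of_int_mult[of P T, OF per] by metis
  qed
  define A1 where "A1 = {t\<in>{0<..<T - c'}. P (t + c')}"
  define A2 where "A2 = {t\<in>{T - c'<..<T}. P (t + c')}"
  have A1: "A1 = (\<lambda>t. t + c') -` {s\<in>{c'<..<T}. P s}" unfolding A1_def by auto
  have A2: "A2 = (\<lambda>t. t + (c' - T)) -` {s\<in>{0<..<c'}. P s}"
    unfolding A2_def using per[of "_ + (c' - T)"] by (auto simp: algebra_simps)
  have "emeasure lborel {t\<in>{0<..<T}. P (t + c)} = emeasure lborel (A1 \<union> A2)"
    unfolding Pc using c'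
    by (intro emeasure_eq_AE eventually_mono[OF AE_lborel_singleton[of "T - c'"]])
       (auto simp: A1_def A2_def)
  also have "\<dots> = emeasure lborel A1 + emeasure lborel A2"
    by (intro plus_emeasure[symmetric]) (auto simp: A1_def A2_def)
  also have "\<dots> = emeasure lborel {s\<in>{c'<..<T}. P s} + emeasure lborel {s\<in>{0<..<c'}. P s}"
    unfolding A1 A2 by (subst (1 2) emeasure_lborel_translate) auto
  also have "\<dots> = emeasure lborel ({s\<in>{c'<..<T}. P s} \<union> {s\<in>{0<..<c'}. P s})"
    by (intro plus_emeasure) auto
  also have "\<dots> = emeasure lborel {t\<in>{0<..<T}. P t}"
    using c' by (intro emeasure_eq_AE eventually_mono[OF AE_lborel_singleton[of c']]) auto
  finally show ?thesis .
qed

lemma (in prob_space) indep_varI_prob_mult: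
  assumes "random_variable S X" "random_variable T Y"
    and "\<And>A B. A \<in> sets S \<Longrightarrow> B \<in> sets T \<Longrightarrow>
      prob ((X -` A \<inter> space M) \<inter> (Y -` B \<inter> space M)) = prob (X -` A \<inter> space M) * prob (Y -` B \<inter> space M)"
  shows "indep_var S X T Y"
proof -
  have "indep_set {X -` A \<inter> space M | A. A \<in> sets S} {Y -` A \<inter> space M | A. A \<in> sets T}"
    unfolding indep_sets2_eq using assms by (auto simp: measurable_def)
  then show ?thesis
    unfolding indep_var_def indep_vars_def2 indep_set_def using assms
    by (auto split: bool.split elim!: back_subst[where P="\<lambda>F. indep_sets F UNIV"]
        simp: fun_eq_iff)
qed

lemma (in pair_sigma_finite) emeasure_pair_measure_if_AE_section_law:
  assumes Y[measurable]: "Y \<in> measurable (M1 \<Otimes>\<^sub>M M2) N"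
    and law: "AE x in M1. \<forall>B\<in>sets N. emeasure M2 ((\<lambda>y. Y (x, y)) -` B \<inter> space M2) = \<nu> B"
    and A[measurable]: "A \<in> sets M1" and B[measurable]: "B \<in> sets N"
  shows "emeasure (M1 \<Otimes>\<^sub>M M2) {p\<in>space (M1 \<Otimes>\<^sub>M M2). fst p \<in> A \<and> Y p \<in> B} = \<nu> B * emeasure M1 A"
proof -
  let ?X = "{p\<in>space (M1 \<Otimes>\<^sub>M M2). fst p \<in> A \<and> Y p \<in> B}"
  have "emeasure (M1 \<Otimes>\<^sub>M M2) ?X = (\<integral>\<^sup>+x. emeasure M2 (Pair x -` ?X) \<partial>M1)"
    by (rule M2.emeasure_pair_measure_alt) measurable
  also have "\<dots> = (\<integral>\<^sup>+x. \<nu> B * indicator A x \<partial>M1)"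
  proof (rule nn_integral_cong_AE)
    show "AE x in M1. emeasure M2 (Pair x -` ?X) = \<nu> B * indicator A x"
    proof (rule AE_mp[OF law AE_I2], intro impI)
      fix x assume "x \<in> space M1" and "\<forall>B\<in>sets N. emeasure M2 ((\<lambda>y. Y (x, y)) -` B \<inter> space M2) = \<nu> B"
      moreover have "Pair x -` ?X = (if x \<in> A then (\<lambda>y. Y (x, y)) -` B \<inter> space M2 else {})"
        using \<open>x \<in> space M1\<close> by (auto simp: space_pair_measure)
      ultimately show "emeasure M2 (Pair x -` ?X) = \<nu> B * indicator A x"
        using B by simp
    qed
  qed
  also have "\<dots> = \<nu> B * emeasure M1 A" by (rule nn_integral_cmult_indicator) fact
  finally show ?thesis .
qed

lemma (in pair_prob_space) indep_var_fst_if_AE_section_law: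
  assumes S: "sets S = sets M1"
    and Y[measurable]: "Y \<in> measurable (M1 \<Otimes>\<^sub>M M2) N"
    and law: "AE x in M1. \<forall>B\<in>sets N. emeasure M2 ((\<lambda>y. Y (x, y)) -` B \<inter> space M2) = \<nu> B"
  shows "indep_var S fst N Y"
proof -
  note joint = emeasure_pair_measure_if_AE_section_law[OF Y law]
  have "{p\<in>space (M1 \<Otimes>\<^sub>M M2). fst p \<in> space M1 \<and> Y p \<in> space N} = space (M1 \<Otimes>\<^sub>M M2)"
    using measurable_space[OF Y] by (auto simp: space_pair_measure)
  then have "\<nu> (space N) = 1"
    using joint[of "space M1" "space N"] by (simp add: emeasure_space_1 M1.emeasure_space_1)
  show ?thesis
  proof (rule indep_varI_prob_mult)
    show "random_variable S fst" by (subst measurable_cong_sets[OF refl S]) simp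
    show "random_variable N Y" by (rule Y)
    fix A B assume A: "A \<in> sets S" and B: "B \<in> sets N"
    have "fst -` A \<inter> space (M1 \<Otimes>\<^sub>M M2) = {p\<in>space (M1 \<Otimes>\<^sub>M M2). fst p \<in> A \<and> Y p \<in> space N}"
      using measurable_space[OF Y] by auto
    moreover have "Y -` B \<inter> space (M1 \<Otimes>\<^sub>M M2) = {p\<in>space (M1 \<Otimes>\<^sub>M M2). fst p \<in> space M1 \<and> Y p \<in> B}"
      by (auto simp: space_pair_measure)
    moreover have "(fst -` A \<inter> space (M1 \<Otimes>\<^sub>M M2)) \<inter> (Y -` B \<inter> space (M1 \<Otimes>\<^sub>M M2))
        = {p\<in>space (M1 \<Otimes>\<^sub>M M2). fst p \<in> A \<and> Y p \<in> B}"
      by auto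
    ultimately show "prob ((fst -` A \<inter> space (M1 \<Otimes>\<^sub>M M2)) \<inter> (Y -` B \<inter> space (M1 \<Otimes>\<^sub>M M2)))
      = prob (fst -` A \<inter> space (M1 \<Otimes>\<^sub>M M2)) * prob (Y -` B \<inter> space (M1 \<Otimes>\<^sub>M M2))"
      using A B S joint[of A B] joint[of A "space N"] joint[of "space M1" B] \<open>\<nu> (space N) = 1\<close>
      by (simp add: measure_def enn2real_mult M1.emeasure_space_1)
  qed
qed

lemma sum_periodic_shift:
  fixes F :: "nat \<Rightarrow> 'a::cancel_comm_monoid_add"
  assumes per: "\<And>i. F (i + n) = F i"
  shows "(\<Sum>i<n. F (i + s)) = (\<Sum>i<n. F i)"
proof (induction s)
  case (Suc s)
  have "(\<Sum>i<n. F (i + Suc s)) + F s = (\<Sum>i<Suc n. F (i + s))"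
    by (subst sum.lessThan_Suc_shift) (simp add: add.commute)
  also have "\<dots> = (\<Sum>i<n. F (i + s)) + F s"
    using per[of s] by (simp add: add.commute)
  finally show ?case using Suc by simp
qed simp

lemma sum_periodic_blocks:
  fixes F :: "nat \<Rightarrow> 'a::semiring_1"
  assumes per: "\<And>i. F (i + n) = F i"
  shows "(\<Sum>i<n * W. F i) = of_nat W * (\<Sum>i<n. F i)"
proof -
  have per_mult: "F (i + m * n) = F i" for i m
  proof (induction m)
    case (Suc m)
    then show ?case using per[of "i + m * n"] by (simp add: algebra_simps)
  qed simp
  have block: "(\<Sum>i\<in>{m * n..<m * n + n}. F i) = (\<Sum>i<n. F i)" for m
    using sum.shift_bounds_nat_ivl[of F 0 "m * n" n]
    by (simp add: per_mult add.commute atLeast0LessThan)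
  have "(\<Sum>i<n * W. F i) = (\<Sum>m<W. \<Sum>i\<in>{m * n..<m * n + n}. F i)"
    using sum.nat_group[of F n W] by (simp add: mult.commute)
  then show ?thesis by (simp add: block)
qed

lemma sum_cos_arith_progression:
  fixes a d :: real
  shows "(\<Sum>j<N. cos (a + real j * d)) * (2 * sin (d / 2)) = sin (a + real N * d - d / 2) - sin (a - d / 2)"
proof (induction N)
  case (Suc N)
  have "sin (x + h) - sin (x - h) = cos x * (2 * sin h)" for x h :: real
    by (simp add: sin_add sin_diff)
  then have "cos (a + real N * d) * (2 * sin (d / 2))
      = sin (a + real N * d + d / 2) - sin (a + real N * d - d / 2)"
    by presburger
  then show ?case using Suc by (simp add: distrib_right algebra_simps)
qed simp

lemma sum_cos_half_turn:
  fixes a :: real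
  assumes "N > 0"
  shows "(\<Sum>j<N. cos (a + real j * (pi / real N))) = - sin (a - pi / (2 * real N)) / sin (pi / (2 * real N))"
proof -
  have sin_pos: "sin (pi / (2 * real N)) > 0"
    using assms by (intro sin_gt_zero) (auto simp: field_simps)
  have "(\<Sum>j<N. cos (a + real j * (pi / real N))) * (2 * sin (pi / (2 * real N)))
      = sin (a + pi - pi / (2 * real N)) - sin (a - pi / (2 * real N))"
    using sum_cos_arith_progression[of a "pi / real N" N] assms by (simp add: mult.commute)
  also have "\<dots> = - 2 * sin (a - pi / (2 * real N))"
    by (simp add: sin_diff sin_add)
  finally show ?thesis using sin_pos by (simp add: field_simps)
qed

lemma sin_grid_pos_iff:
  fixes f :: real and j N :: nat
  assumes f: "0 < f" "f < 1" and j: "j < 2 * N"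
  shows "0 < sin (pi * (f + real j) / real N) \<longleftrightarrow> j < N"
proof -
  have N: "real N > 0" using j by simp
  define r where "r = (f + real j) / real N"
  have arg: "pi * (f + real j) / real N = pi * r" by (simp add: r_def)
  show ?thesis
  proof (cases "j < N")
    case True
    then have "0 < r" "r < 1" using f N by (auto simp: r_def field_simps)
    then have "0 < sin (pi * r)" by (intro sin_gt_zero) auto
    then show ?thesis using True arg by simp
  next
    case False
    then have "1 < r" "r < 2" using f N j by (auto simp: r_def field_simps)
    then have "0 < sin (pi * r - pi)"
      by (intro sin_gt_zero) (auto simp: algebra_simps)
    then show ?thesis using False arg by (simp add: sin_diff)
  qed
qed

(* For even n the hypothesis says exactly that no cos (psi + 2 pi k / n) vanishes. *)
lemma cos_pos_iff_rotated:
  fixes n :: nat and psi :: real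
  assumes n: "even n" "n > 0" and generic: "real n * (psi + pi / 2) / (2 * pi) \<notin> \<int>"
  shows "\<exists>m. \<forall>j<n. 0 < cos (psi + 2 * pi * real (j + m) / real n) \<longleftrightarrow> j < n div 2"
proof -
  define N where "N = n div 2"
  have nN: "real n = 2 * real N" using n by (simp add: N_def real_of_nat_div)
  have N: "real N > 0" using n nN by simp
  define y where "y = real n * (psi + pi / 2) / (2 * pi)"
  have f: "0 < frac y" "frac y < 1"
    using generic frac_ge_0[of y] frac_lt_1[of y] frac_eq_0_iff[of y] by (auto simp: y_def)
  have psi: "psi = 2 * pi * y / real n - pi / 2" using n by (simp add: y_def field_simps)
  define m where "m = nat ((- \<lfloor>y\<rfloor>) mod int n)"
  obtain k where k: "(- \<lfloor>y\<rfloor>) mod int n - (- \<lfloor>y\<rfloor>) = int n * k"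
    using mod_eq_dvd_iff[of "(- \<lfloor>y\<rfloor>) mod int n" "int n" "- \<lfloor>y\<rfloor>"] by (auto elim: dvdE)
  have "int m = int n * k - \<lfloor>y\<rfloor>"
    using k n by (simp add: m_def)
  then have m: "real m = real n * of_int k - of_int \<lfloor>y\<rfloor>"
    by (metis of_int_diff of_int_mult of_int_of_nat_eq)
  have "0 < cos (psi + 2 * pi * real (j + m) / real n) \<longleftrightarrow> j < N" if "j < n" for j
  proof -
    have "psi + 2 * pi * real (j + m) / real n
        = (pi * (frac y + real j) / real N - pi / 2) + (2 * pi) * of_int k"
      using N unfolding psi frac_def by (simp add: m nN field_simps)
    then have "cos (psi + 2 * pi * real (j + m) / real n) = sin (pi * (frac y + real j) / real N)"
      by (simp add: cos_add cos_diff)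
    then show ?thesis using sin_grid_pos_iff[OF f, of j N] that n by (simp add: N_def)
  qed
  then show ?thesis unfolding N_def by blast
qed

lemma abs_cos_le_iff:
  fixes t s :: real
  assumes "0 \<le> t" "t \<le> pi" "0 \<le> s" "s \<le> 1"
  shows "\<bar>cos t\<bar> \<le> s \<longleftrightarrow> arccos s \<le> t \<and> t \<le> pi - arccos s"
proof -
  have "cos t \<le> s \<longleftrightarrow> arccos s \<le> arccos (cos t)"
    using assms by (subst arccos_le_mono) auto
  moreover have "- s \<le> cos t \<longleftrightarrow> arccos (cos t) \<le> arccos (- s)"
    using assms by (subst arccos_le_mono) auto
  ultimately show ?thesis using assms by (auto simp: abs_le_iff arccos_cos arccos_minus)
qed

lemma emeasure_lborel_cos_sq_le:
  fixes z :: real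
  assumes "0 \<le> z" "z \<le> 1"
  shows "emeasure lborel {t\<in>{0<..<2 * pi}. (cos t)\<^sup>2 \<le> z} = ennreal (2 * pi - 4 * arccos (sqrt z))"
proof -
  define b where "b = arccos (sqrt z)"
  have s: "0 \<le> sqrt z" "sqrt z \<le> 1" using assms by auto
  have b: "0 \<le> b" "b \<le> pi / 2"
    using s arccos_lbound[of "sqrt z"] arccos_le_pi2[of "sqrt z"] unfolding b_def by linarith+
  have sq: "(cos t)\<^sup>2 \<le> z \<longleftrightarrow> \<bar>cos t\<bar> \<le> sqrt z" for t
    by (metis abs_le_square_iff abs_of_nonneg real_sqrt_ge_zero real_sqrt_pow2 assms(1))
  have key: "t \<in> {0<..<2 * pi} \<and> (cos t)\<^sup>2 \<le> z \<longleftrightarrow> t \<in> {b..pi - b} \<union> {pi + b<..2 * pi - b}"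
    if "t \<noteq> pi + b" "t \<noteq> 0" "t \<noteq> 2 * pi" for t
  proof (cases "t \<le> pi")
    case True
    then show ?thesis using abs_cos_le_iff[of t "sqrt z"] s b that unfolding sq b_def
      by (cases "0 \<le> t") auto
  next
    case False
    have "cos t = cos (2 * pi - t)" by (simp add: cos_diff)
    then show ?thesis using abs_cos_le_iff[of "2 * pi - t" "sqrt z"] s b that False unfolding sq b_def
      by (cases "t < 2 * pi") auto
  qed
  have "emeasure lborel {t\<in>{0<..<2 * pi}. (cos t)\<^sup>2 \<le> z} = emeasure lborel ({b..pi - b} \<union> {pi + b<..2 * pi - b})"
    by (intro emeasure_eq_AE eventually_mono[OF AE_conjI[OF AE_lborel_singleton[of "pi + b"]
          AE_conjI[OF AE_lborel_singleton[of 0] AE_lborel_singleton[of "2 * pi"]]]])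
       (use key in auto)
  also have "\<dots> = emeasure lborel {b..pi - b} + emeasure lborel {pi + b<..2 * pi - b}"
    using b by (intro plus_emeasure[symmetric]) auto
  also have "\<dots> = ennreal (2 * pi - 4 * b)"
    using b by (simp add: ennreal_plus[symmetric] del: ennreal_plus)
  finally show ?thesis by (simp add: b_def)
qed

lemma space_Unif [simp]: "space Unif = UNIV"
  and sets_Unif [simp, measurable_cong]: "sets Unif = sets borel"
  by (auto simp: Unif_def)

lemma prob_space_Unif: "prob_space Unif"
  unfolding Unif_def by (intro prob_space_uniform_measure) auto

lemma emeasure_Unif:
  assumes [measurable]: "Measurable.pred borel Q"
  shows "emeasure Unif {t. Q t} = emeasure lborel {t\<in>{0<..<2 * pi}. Q t} / ennreal (2 * pi)"
proof -
  have "emeasure Unif {t. Q t} = emeasure lborel ({0<..<2 * pi} \<inter> {t. Q t}) / emeasure lborel {0<..<2 * pi::real}"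
    unfolding Unif_def by (subst emeasure_uniform_measure) auto
  moreover have "{0<..<2 * pi} \<inter> {t. Q t} = {t\<in>{0<..<2 * pi}. Q t}" by auto
  ultimately show ?thesis by simp
qed

lemma emeasure_Unif_periodic_shift:
  fixes P :: "real \<Rightarrow> bool"
  assumes [measurable]: "Measurable.pred borel P" and per: "\<And>x. P (x + 2 * pi) = P x"
  shows "emeasure Unif {t. P (t + c)} = emeasure Unif {t. P t}"
  using emeasure_lborel_periodic_shift[of P "2 * pi" c] per by (subst (1 2) emeasure_Unif) auto

lemma AE_Unif_not_in_countable:
  assumes "countable C"
  shows "AE x in Unif. x \<notin> C"
proof -
  have "AE x in lborel. x \<notin> C"
    by (rule AE_not_in[OF countable_imp_null_set_lborel[OF assms]])
  then show ?thesis
    unfolding Unif_def by (intro AE_uniform_measureI) (auto elim: eventually_mono)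
qed

lemma measure_Unif_sin_sq_le:
  fixes K y c :: real
  assumes K: "K > 0" and y: "0 \<le> y" "y \<le> K"
  shows "measure Unif {t. K * (sin (t + c))\<^sup>2 \<le> y} = 1 - arccos (2 * y / K - 1) / pi"
proof -
  define z where "z = y / K"
  have z: "0 \<le> z" "z \<le> 1" using K y by (auto simp: z_def field_simps)
  define b where "b = arccos (sqrt z)"
  have "0 \<le> sqrt z" "sqrt z \<le> 1" using z by auto
  then have b: "0 \<le> b" "b \<le> pi / 2"
    using arccos_lbound[of "sqrt z"] arccos_le_pi2[of "sqrt z"] unfolding b_def by linarith+
  have "cos (t + (c - pi / 2)) = sin (t + c)" for t
    using cos_diff[of "t + c" "pi / 2"] by (simp add: add_diff_eq)
  then have "K * (sin (t + c))\<^sup>2 \<le> y \<longleftrightarrow> (cos (t + (c - pi / 2)))\<^sup>2 \<le> z" for t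
    using K by (simp add: z_def pos_le_divide_eq mult.commute)
  then have "emeasure Unif {t. K * (sin (t + c))\<^sup>2 \<le> y} = emeasure Unif {t. (cos t)\<^sup>2 \<le> z}"
    using emeasure_Unif_periodic_shift[of "\<lambda>x. (cos x)\<^sup>2 \<le> z" "c - pi / 2"] by simp
  also have "\<dots> = ennreal (2 * pi - 4 * b) / ennreal (2 * pi)"
    using emeasure_lborel_cos_sq_le[OF z] by (subst emeasure_Unif) (auto simp: b_def)
  also have "\<dots> = ennreal (1 - 2 * b / pi)"
    using b by (subst divide_ennreal) (auto simp: field_simps)
  finally have "measure Unif {t. K * (sin (t + c))\<^sup>2 \<le> y} = 1 - 2 * b / pi"
    using b by (simp add: measure_def)
  moreover have "arccos (2 * y / K - 1) = 2 * b"
  proof -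
    have "cos (2 * b) = 2 * z - 1"
      using z by (simp add: b_def cos_double_cos cos_arccos_abs)
    then have "arccos (2 * y / K - 1) = arccos (cos (2 * b))" by (simp add: z_def)
    also have "\<dots> = 2 * b" using b by (intro arccos_cos) auto
    finally show ?thesis .
  qed
  ultimately show ?thesis by simp
qed

lemma Re_hcoef: "Re (hcoef zeta psi n k) = sqrt zeta * cos (psi + 2 * pi * (real k - 1) / real n)"
  by (simp add: hcoef_def cis.sel)

lemma K1_eq:
  assumes "zeta > 0"
  shows "K1 W n zeta psi = {k \<in> {2..n * W + 1}. 0 < cos (psi + 2 * pi * (real k - 1) / real n)}"
  using assms unfolding K1_def Re_hcoef by (simp add: zero_less_mult_iff)

(* The summand of index k = i + 1 in the sums over K_1 defining Yint and alphaI. *)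
definition gated_cos :: "nat \<Rightarrow> real \<Rightarrow> real \<Rightarrow> nat \<Rightarrow> real" where
  "gated_cos n psi t i =
     (if 0 < cos (psi + 2 * pi * real i / real n) then cos (t + 2 * pi * real i / real n) else 0)"

lemma gated_cos_periodic:
  assumes "n > 0"
  shows "gated_cos n psi t (i + n) = gated_cos n psi t i"
proof -
  have "2 * pi * real (i + n) / real n = 2 * pi * real i / real n + 2 * pi"
    using assms by (simp add: field_simps)
  then show ?thesis by (simp add: gated_cos_def add.assoc[symmetric])
qed

lemma sum_K1_eq_sum_gated_cos:
  assumes "zeta > 0"
  shows "(\<Sum>k\<in>K1 W n zeta psi. cos (t + 2 * pi * (real k - 1) / real n))
    = (\<Sum>i<n * W. gated_cos n psi t (Suc i))"
proof -
  have "(\<Sum>k\<in>K1 W n zeta psi. cos (t + 2 * pi * (real k - 1) / real n))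
      = (\<Sum>k\<in>{2..n * W + 1}. if 0 < cos (psi + 2 * pi * (real k - 1) / real n)
                               then cos (t + 2 * pi * (real k - 1) / real n) else 0)"
    unfolding K1_eq[OF assms] by (rule sum.inter_filter) simp
  also have "\<dots> = (\<Sum>i<n * W. gated_cos n psi t (Suc i))"
    by (rule sum.reindex_bij_witness[of _ "\<lambda>i. i + 2" "\<lambda>k. k - 2"])
       (auto simp: gated_cos_def of_nat_diff)
  finally show ?thesis .
qed

lemma Yint_eq_sum_gated_cos:
  assumes "zeta_u > 0" "zeta_t \<ge> 0"
  shows "Yint W n zeta_u psi zeta_t t = zeta_t * (\<Sum>i<n * W. gated_cos n psi t (Suc i))\<^sup>2"
  using assms sum_K1_eq_sum_gated_cos[OF assms(1)]
  by (simp add: Yint_def Re_hcoef power_mult_distrib sum_distrib_left[symmetric])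

lemma alphaI_eq_sum_gated_cos:
  assumes "zeta_u > 0"
  shows "alphaI W n zeta_u psi = zeta_u * (\<Sum>i<n * W. gated_cos n psi psi (Suc i))\<^sup>2"
  using assms sum_K1_eq_sum_gated_cos[OF assms(1)]
  by (simp add: alphaI_def Re_hcoef power_mult_distrib sum_distrib_left[symmetric])

lemma sum_gated_cos_eq_sin:
  fixes n :: nat
  assumes n: "even n" "n > 0" and generic: "real n * (psi + pi / 2) / (2 * pi) \<notin> \<int>"
  shows "\<exists>c. \<forall>t. (\<Sum>i<n. gated_cos n psi t i) = - sin (t + c) / sin (pi / real n)"
proof -
  obtain m where m: "\<And>j. j < n \<Longrightarrow> 0 < cos (psi + 2 * pi * real (j + m) / real n) \<longleftrightarrow> j < n div 2"
    using cos_pos_iff_rotated[OF n generic] by blast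
  define N where "N = n div 2"
  have nN: "real n = 2 * real N" using n by (simp add: N_def real_of_nat_div)
  have N: "N > 0" using n nN by simp
  define c where "c = 2 * pi * real m / real n - pi / real n"
  have "(\<Sum>i<n. gated_cos n psi t i) = - sin (t + c) / sin (pi / real n)" for t
  proof -
    have "(\<Sum>i<n. gated_cos n psi t i) = (\<Sum>i<n. gated_cos n psi t (i + m))"
      by (rule sum_periodic_shift[symmetric]) (rule gated_cos_periodic[OF n(2)])
    also have "\<dots> = (\<Sum>i<n. if i < N then cos (t + 2 * pi * real (i + m) / real n) else 0)"
      using m by (intro sum.cong refl) (simp add: gated_cos_def N_def)
    also have "\<dots> = (\<Sum>i<N. cos ((t + 2 * pi * real m / real n) + real i * (pi / real N)))"
    proof -
      have "{i \<in> {..<n}. i < N} = {..<N}" using nN by auto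
      moreover have "t + 2 * pi * real (i + m) / real n = (t + 2 * pi * real m / real n) + real i * (pi / real N)" for i
        using N by (simp add: nN field_simps)
      ultimately show ?thesis by (simp add: sum.inter_filter[symmetric] add.assoc)
    qed
    also have "\<dots> = - sin (t + c) / sin (pi / real n)"
      using sum_cos_half_turn[OF N, of "t + 2 * pi * real m / real n"]
      by (simp add: c_def nN diff_divide_distrib add_diff_eq)
    finally show ?thesis .
  qed
  then show ?thesis by blast
qed

lemma Yint_eq_scaled_sin_sq:
  fixes n W :: nat
  assumes n: "even n" "n > 0" and zu: "zeta_u > 0" and zt: "zeta_t \<ge> 0"
    and generic: "real n * (psi + pi / 2) / (2 * pi) \<notin> \<int>"
  shows "\<exists>c. \<forall>t. Yint W n zeta_u psi zeta_t t = zeta_t / (sin (pi / real n) / real W)\<^sup>2 * (sin (t + c))\<^sup>2"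
proof -
  obtain c where c: "\<And>t. (\<Sum>i<n. gated_cos n psi t i) = - sin (t + c) / sin (pi / real n)"
    using sum_gated_cos_eq_sin[OF n generic] by blast
  have "Yint W n zeta_u psi zeta_t t = zeta_t / (sin (pi / real n) / real W)\<^sup>2 * (sin (t + c))\<^sup>2" for t
  proof -
    note per = gated_cos_periodic[OF n(2)]
    have "(\<Sum>i<n * W. gated_cos n psi t (Suc i)) = real W * (\<Sum>i<n. gated_cos n psi t (Suc i))"
      by (rule sum_periodic_blocks) (metis add_Suc per)
    also have "(\<Sum>i<n. gated_cos n psi t (Suc i)) = (\<Sum>i<n. gated_cos n psi t i)"
      using sum_periodic_shift[of "gated_cos n psi t" n 1, OF per] by simp
    finally have "(\<Sum>i<n * W. gated_cos n psi t (Suc i)) = - real W * sin (t + c) / sin (pi / real n)"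
      by (simp add: c)
    then show ?thesis
      using Yint_eq_sum_gated_cos[OF zu zt] by (simp add: power_divide power_mult_distrib)
  qed
  then show ?thesis by blast
qed

lemma Yint_measurable [measurable]:
  assumes "zeta_u > 0" "zeta_t \<ge> 0"
  shows "(\<lambda>p. Yint W n zeta_u (fst p) zeta_t (snd p)) \<in> borel_measurable (Unif \<Otimes>\<^sub>M Unif)"
  by (simp only: Yint_eq_sum_gated_cos[OF assms] gated_cos_def) measurable

lemma alphaI_measurable [measurable]:
  assumes "zeta_u > 0"
  shows "alphaI W n zeta_u \<in> borel_measurable borel"
proof -
  have "alphaI W n zeta_u = (\<lambda>psi. zeta_u * (\<Sum>i<n * W. gated_cos n psi psi (Suc i))\<^sup>2)"
    using alphaI_eq_sum_gated_cos[OF assms] by (intro ext)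
  then show ?thesis by (simp add: gated_cos_def)
qed

lemma AE_Unif_generic_phase:
  assumes "n > 0"
  shows "AE psi in Unif. real n * (psi + pi / 2) / (2 * pi) \<notin> \<int>"
proof -
  have "{psi. real n * (psi + pi / 2) / (2 * pi) \<in> \<int>} \<subseteq> range (\<lambda>k::int. 2 * pi * of_int k / real n - pi / 2)"
  proof
    fix psi assume "psi \<in> {psi. real n * (psi + pi / 2) / (2 * pi) \<in> \<int>}"
    then obtain k where "real n * (psi + pi / 2) / (2 * pi) = of_int k" by (auto elim: Ints_cases)
    then have "psi = 2 * pi * of_int k / real n - pi / 2" using assms by (simp add: field_simps)
    then show "psi \<in> range (\<lambda>k::int. 2 * pi * of_int k / real n - pi / 2)" by blast
  qed
  then have "countable {psi. real n * (psi + pi / 2) / (2 * pi) \<in> \<int>}"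
    by (rule countable_subset) simp
  then show ?thesis by (auto dest: AE_Unif_not_in_countable)
qed

lemma emeasure_Unif_Yint_section:
  assumes n: "even n" "n > 0" and zu: "zeta_u > 0" and zt: "zeta_t \<ge> 0"
    and generic: "real n * (psi + pi / 2) / (2 * pi) \<notin> \<int>" and [measurable]: "B \<in> sets borel"
  shows "emeasure Unif {t. Yint W n zeta_u psi zeta_t t \<in> B} =
    emeasure Unif {t. zeta_t / (sin (pi / real n) / real W)\<^sup>2 * (sin t)\<^sup>2 \<in> B}"
proof -
  define K where "K = zeta_t / (sin (pi / real n) / real W)\<^sup>2"
  obtain c where "\<And>t. Yint W n zeta_u psi zeta_t t = K * (sin (t + c))\<^sup>2"
    using Yint_eq_scaled_sin_sq[OF n zu zt generic] unfolding K_def by blast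
  then show ?thesis
    unfolding K_def[symmetric]
    by (simp add: emeasure_Unif_periodic_shift[where P = "\<lambda>x. K * (sin x)\<^sup>2 \<in> B"])
qed

lemma AE_measure_Unif_Yint_le:
  fixes W n :: nat
  assumes n: "even n" "n > 0" and W: "W > 0" and zu: "zeta_u > 0" and zt: "zeta_t > 0"
  defines "V \<equiv> sin (pi / real n) / real W"
  shows "AE psi in Unif. \<forall>y. 0 \<le> y \<and> y \<le> zeta_t / V\<^sup>2 \<longrightarrow>
    measure Unif {t. Yint W n zeta_u psi zeta_t t \<le> y} = 1 - arccos (2 * V\<^sup>2 / zeta_t * y - 1) / pi"
proof -
  have "sin (pi / real n) > 0" using n by (intro sin_gt_zero) (auto simp: field_simps)
  then have V: "V > 0" unfolding V_def using W by simp
  show ?thesis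
    using AE_Unif_generic_phase[OF n(2)]
  proof (rule eventually_mono)
    fix psi assume "real n * (psi + pi / 2) / (2 * pi) \<notin> \<int>"
    then obtain c where c: "\<And>t. Yint W n zeta_u psi zeta_t t = zeta_t / V\<^sup>2 * (sin (t + c))\<^sup>2"
      using Yint_eq_scaled_sin_sq[OF n zu less_imp_le[OF zt]] unfolding V_def by blast
    show "\<forall>y. 0 \<le> y \<and> y \<le> zeta_t / V\<^sup>2 \<longrightarrow>
      measure Unif {t. Yint W n zeta_u psi zeta_t t \<le> y} = 1 - arccos (2 * V\<^sup>2 / zeta_t * y - 1) / pi"
      using measure_Unif_sin_sq_le[of "zeta_t / V\<^sup>2" _ c] zt V by (simp add: c field_simps)
  qed
qed

lemma indep_var_fst_Yint:
  assumes n: "even n" "n > 0" and zu: "zeta_u > 0" and zt: "zeta_t \<ge> 0"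
  shows "prob_space.indep_var (Unif \<Otimes>\<^sub>M Unif) borel fst borel (\<lambda>p. Yint W n zeta_u (fst p) zeta_t (snd p))"
proof -
  interpret pair_prob_space Unif Unif
    by (simp add: pair_prob_space_def pair_sigma_finite_def prob_space_Unif prob_space_imp_sigma_finite)
  show ?thesis
  proof (rule indep_var_fst_if_AE_section_law)
    show "AE psi in Unif. \<forall>B\<in>sets borel.
      emeasure Unif ((\<lambda>t. Yint W n zeta_u (fst (psi, t)) zeta_t (snd (psi, t))) -` B \<inter> space Unif)
        = emeasure Unif {t. zeta_t / (sin (pi / real n) / real W)\<^sup>2 * (sin t)\<^sup>2 \<in> B}"
      using AE_Unif_generic_phase[of n] n
      by (auto elim!: eventually_mono simp: vimage_def emeasure_Unif_Yint_section[OF n zu zt])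
  qed (use zu zt in simp_all)
qed

theorem theorem4:
  fixes W mu :: nat and zeta_u zeta_t :: real
  assumes "W \<ge> 1" and "mu \<ge> 2" and "even mu"
    and "zeta_u > 0" and "zeta_t > 0"
  defines "V \<equiv> sin (pi / real mu) / real W"
  shows "(AE psi_u in Unif.
            \<forall>y. 0 \<le> y \<and> y \<le> zeta_t / V\<^sup>2 \<longrightarrow>
              measure Unif {psi_t \<in> space Unif. Yint W mu zeta_u psi_u zeta_t psi_t \<le> y}
                = 1 - arccos (2 * V\<^sup>2 / zeta_t * y - 1) / pi)
       \<and> prob_space.indep_var (Unif \<Otimes>\<^sub>M Unif) borel fst borel
            (\<lambda>p. Yint W mu zeta_u (fst p) zeta_t (snd p))
       \<and> prob_space.indep_var (Unif \<Otimes>\<^sub>M Unif) borel (\<lambda>p. alphaI W mu zeta_u (fst p)) borel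
            (\<lambda>p. Yint W mu zeta_u (fst p) zeta_t (snd p))"
proof -
  have mu: "even mu" "mu > 0" and W: "W > 0" using assms(1-3) by auto
  note indep = indep_var_fst_Yint[OF mu assms(4) less_imp_le[OF assms(5)], of W]
  have "prob_space (Unif \<Otimes>\<^sub>M Unif)" by (intro prob_space_pair prob_space_Unif)
  note indep_alphaI = prob_space.indep_var_compose[OF this indep alphaI_measurable[OF assms(4)] measurable_ident]
  show ?thesis
    using AE_measure_Unif_Yint_le[OF mu W assms(4,5)] indep indep_alphaI
    unfolding V_def by (simp add: comp_def)
qed

end
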